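(* Let $c_0,c_1>0$ be sufficiently large numerical constants, let $K\ge2$ be a fixed integer, and define $\beta_1=T^{-c_0}$, $\beta_t=\frac{c_1\log T}{T}\min\{\beta_1(1+\frac{c_1\log T}{T})^t,1\}$ for $2\le t\le T$, $\alpha_t=1-\beta_t$, $\overline\alpha_t=\prod_{i=1}^t\alpha_i$. For $2\le t\le T$ let $\tau_{t,0}=1-\overline\alpha_t$, $\tau_{t,K-1}=1-\overline\alpha_{t-1}$, $\tau_{t,i}=\tau_{t,0}-\frac{i}{K-1}(\tau_{t,0}-\tau_{t,K-1})$ for $0\le i\le K-1$, let $\psi_i(\tau)=\prod_{i'\ne i}(\tau-\tau_{t,i'})/\prod_{i'\ne i}(\tau_{t,i}-\tau_{t,i'})$ (products over $0\le i'\le K-1$, $i'\ne i$) and $\gamma_{t,i}(\tau')=\int_{\tau'}^{\tau_{t,0}}\psi_i(\tau)d\tau$. Then for $T$ large enough: (a) $\alpha_t\ge 1-\frac{c_1\log T}{T}\ge\frac12$ for $1\le t\le T$; (b) $\frac12\frac{1-\alpha_t}{1-\overline\alpha_t}\le\frac12\frac{1-\alpha_t}{\alpha_t-\overline\alpha_t}\le\frac{1-\alpha_t}{1-\overline\alpha_{t-1}}\le\frac{4c_1\log T}{T}$ for $2\le t\le T$; (c) $1\le\frac{1-\overline\alpha_t}{1-\overline\alpha_{t-1}}\le1+\frac{4c_1\log T}{T}$ for $2\le t\le T$; (d) $\overline\alpha_T\le T^{-c_2}$ for a sufficiently large constant $c_2$; (e) $\frac{\overline\alpha_{t+1}}{1-\overline\alpha_{t+1}}\le\frac{\overline\alpha_t}{1-\overline\alpha_t}\le\frac{4\overline\alpha_{t+1}}{1-\overline\alpha_{t+1}}$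 for $1\le t<T$; (f) $\Big|\frac{\tau_{t,i_1}-\tau_{t,i_2}}{\tau_{t,i_3}(1-\tau_{t,i_4})}\Big|\le 8c_1\frac{\log T}{T}$ for $2\le t\le T$ and $0\le i_1,i_2,i_3,i_4\le K-1$; (g) $|\gamma_{t,i}(\tau_{t,j})|\le 2^K(\tau_{t,0}-\tau_{t,j})$ for all $0\le i,j\le K-1$; (h) $1-\tau_{t,i}\asymp 1-\tau_{t,j}$ and $\tau_{t,i}\asymp\tau_{t,j}$ for all $0\le i,j\le K-1$, $2\le t\le T$.
   Context: $a\asymp b$ means $c\,b\le a\le C\,b$ for positive numerical constants $c,C$ independent of $T$, $t$, $i$, $j$. *)

theory Defs
  imports "HOL-Analysis.Analysis"
begin

definition beta :: "real \<Rightarrow> real \<Rightarrow> nat \<Rightarrow> nat \<Rightarrow> real" where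
  "beta c0 c1 T t =
     (if t = 1 then real T powr (- c0)
      else c1 * ln (real T) / real T *
           min (real T powr (- c0) * (1 + c1 * ln (real T) / real T) ^ t) 1)"

definition alpha :: "real \<Rightarrow> real \<Rightarrow> nat \<Rightarrow> nat \<Rightarrow> real" where
  "alpha c0 c1 T t = 1 - beta c0 c1 T t"

definition alphabar :: "real \<Rightarrow> real \<Rightarrow> nat \<Rightarrow> nat \<Rightarrow> real" where
  "alphabar c0 c1 T t = (\<Prod>i\<in>{1..t}. alpha c0 c1 T i)"

definition tau :: "real \<Rightarrow> real \<Rightarrow> nat \<Rightarrow> nat \<Rightarrow> nat \<Rightarrow> nat \<Rightarrow> real" where
  "tau c0 c1 K T t i =
     (1 - alphabar c0 c1 T t)
     - real i / real (K - 1) * ((1 - alphabar c0 c1 T t) - (1 - alphabar c0 c1 T (t - 1)))"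

definition psi :: "real \<Rightarrow> real \<Rightarrow> nat \<Rightarrow> nat \<Rightarrow> nat \<Rightarrow> nat \<Rightarrow> real \<Rightarrow> real" where
  "psi c0 c1 K T t i x =
     (\<Prod>i'\<in>{0..K-1} - {i}. (x - tau c0 c1 K T t i')) /
     (\<Prod>i'\<in>{0..K-1} - {i}. (tau c0 c1 K T t i - tau c0 c1 K T t i'))"

definition oint :: "real \<Rightarrow> real \<Rightarrow> (real \<Rightarrow> real) \<Rightarrow> real" where
  "oint a b f = (if a \<le> b then integral {a..b} f else - integral {b..a} f)"

definition gamma :: "real \<Rightarrow> real \<Rightarrow> nat \<Rightarrow> nat \<Rightarrow> nat \<Rightarrow> nat \<Rightarrow> real \<Rightarrow> real" where
  "gamma c0 c1 K T t i x = oint x (tau c0 c1 K T t 0) (psi c0 c1 K T t i)"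

end

theory Submission
  imports Defs "HOL-Real_Asymp.Real_Asymp"
begin

(* Write L = c1 log T / T and ramp(t) = min (T^(-c0) (1 + L)^t) 1, so that beta_t = L ramp(t)
   for t >= 2. The central estimate is beta_(t+1) <= 4 L (1 - alphabar_t), i.e. 1 - alphabar_t
   stays above ramp(t+1)/4: by induction, since the increment L ramp(t+1) alphabar_t of
   1 - alphabar is large enough to absorb the growth factor 1 + L of the ramp. With alpha_t >= 3/4 this
   gives the one-step comparisons (b), (c), (e), (f), (h). For (d), once t >= T/2 the ramp
   has saturated (c1 >= 4 c0), so alphabar_T <= (1 - L)^(T/2) <= T^(-c1/2). For (g), the
   nodes tau_(t,i) are equispaced, and after rescaling them to 0, ..., K-1 every Lagrange
   basis polynomial is bounded by 2^K on [0, K-1]. *)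

lemma prod_real_diff_eq_fact: "(\<Prod>k\<in>{a+1..b}. real (k - a)) = fact (b - a)"
proof (cases "a \<le> b")
  case True
  have "(\<Prod>k\<in>{a+1..b}. real (k - a)) = (\<Prod>k\<in>{1+a..(b-a)+a}. real (k - a))"
    using True by (simp add: add.commute)
  also have "\<dots> = (\<Prod>j\<in>{1..b-a}. real (j + a - a))"
    by (rule prod.shift_bounds_cl_nat_ivl)
  also have "\<dots> = fact (b - a)" by (simp add: fact_prod)
  finally show ?thesis .
next
  case False then show ?thesis by simp
qed

lemma prod_abs_diff_nodes_eq:
  assumes "i \<le> n"
  shows "(\<Prod>k\<in>{0..n}-{i}. \<bar>real i - real k\<bar>) = fact i * fact (n - i)"
proof -
  have split: "{0..n}-{i} = {0..<i} \<union> {i+1..n}" using assms by auto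
  have "(\<Prod>k\<in>{0..<i}. \<bar>real i - real k\<bar>) = (\<Prod>k\<in>{0..<i}. real (i - k))"
    by (rule prod.cong) (auto simp: of_nat_diff)
  also have "\<dots> = fact i" by (simp add: fact_prod_rev)
  finally have low: "(\<Prod>k\<in>{0..<i}. \<bar>real i - real k\<bar>) = fact i" .
  have "(\<Prod>k\<in>{i+1..n}. \<bar>real i - real k\<bar>) = (\<Prod>k\<in>{i+1..n}. real (k - i))"
    by (rule prod.cong) (auto simp: of_nat_diff)
  also have "\<dots> = fact (n - i)" by (rule prod_real_diff_eq_fact)
  finally have high: "(\<Prod>k\<in>{i+1..n}. \<bar>real i - real k\<bar>) = fact (n - i)" .
  show ?thesis
    unfolding split using low high by (subst prod.union_disjoint) auto
qed

lemma prod_tent_eq: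
  assumes "m \<le> n"
  shows "(\<Prod>k\<in>{0..n}. if k \<le> m then real (m + 1 - k) else real (k - m))
           = fact (m + 1) * fact (n - m)"
proof -
  have split: "{0..n} = {0..<m+1} \<union> {m+1..n}" using assms by auto
  have "(\<Prod>k\<in>{0..<m+1}. if k \<le> m then real (m + 1 - k) else real (k - m))
          = (\<Prod>k\<in>{0..<m+1}. real (m + 1 - k))"
    by (rule prod.cong) auto
  also have "\<dots> = fact (m + 1)" by (simp add: fact_prod_rev)
  finally have low: "(\<Prod>k\<in>{0..<m+1}. if k \<le> m then real (m + 1 - k) else real (k - m))
                       = fact (m + 1)" .
  have "(\<Prod>k\<in>{m+1..n}. if k \<le> m then real (m + 1 - k) else real (k - m))
          = (\<Prod>k\<in>{m+1..n}. real (k - m))"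
    by (rule prod.cong) auto
  also have "\<dots> = fact (n - m)" by (rule prod_real_diff_eq_fact)
  finally have high: "(\<Prod>k\<in>{m+1..n}. if k \<le> m then real (m + 1 - k) else real (k - m))
                        = fact (n - m)" .
  show ?thesis using low high
    unfolding split by (subst prod.union_disjoint) auto
qed

lemma fact_Suc_mult_fact_le:
  assumes "i \<le> m" "m \<le> n"
  shows "fact (m + 1) * fact (n - m) \<le> (2::nat) ^ (n + 1) * fact i * fact (n - i) * (m + 1 - i)"
proof -
  have "fact (m + 1) = fact i * fact (m + 1 - i) * ((m + 1) choose i)"
    using binomial_fact_lemma[of i "m + 1"] assms by simp
  also have "fact (m + 1 - i) = (m + 1 - i) * (fact (m - i) :: nat)"
    using assms by (simp add: Suc_diff_le)
  finally have fact_eq: "fact (m + 1) = ((m + 1) choose i) * fact i * (m + 1 - i) * fact (m - i)"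
    by (simp only: mult_ac)
  have "fact (m - i) * fact (n - m) dvd (fact (n - i) :: nat)"
    using fact_fact_dvd_fact[of "m - i" "n - m"] assms by simp
  then have facts_le: "fact (m - i) * fact (n - m) \<le> (fact (n - i) :: nat)"
    by (rule dvd_imp_le) simp
  have "(m + 1) choose i \<le> 2 ^ (m + 1)" by (rule binomial_le_pow2)
  also have "\<dots> \<le> 2 ^ (n + 1)" using assms by (intro power_increasing) auto
  finally have "fact (m + 1) * fact (n - m)
      \<le> 2 ^ (n + 1) * fact i * (m + 1 - i) * (fact (m - i) * fact (n - m))"
    unfolding fact_eq by (simp only: mult.assoc) (intro mult_right_mono; simp)
  also have "\<dots> \<le> 2 ^ (n + 1) * fact i * (m + 1 - i) * fact (n - i)"
    using facts_le by (intro mult_left_mono) auto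
  finally show ?thesis by (simp only: mult_ac)
qed

text \<open>For \<open>s\<close> in the unit cell \<open>[m, m+1]\<close>, the distance to the node \<open>k\<close> is
  at most \<open>m + 1 - k\<close> to the left and \<open>k - m\<close> to the right.\<close>

lemma prod_abs_diff_nodes_le_right:
  fixes s :: real
  assumes "i \<le> n" "real i \<le> s" "s \<le> real n"
  shows "(\<Prod>k\<in>{0..n}-{i}. \<bar>s - real k\<bar>) \<le> 2 ^ (n + 1) * fact i * fact (n - i)"
proof -
  define m where "m = nat \<lfloor>s\<rfloor>"
  have cell: "real m \<le> s" "s < real m + 1" using assms unfolding m_def by linarith+
  have im: "i \<le> m" and mn: "m \<le> n" using cell assms by linarith+
  define b where "b k = (if k \<le> m then real (m + 1 - k) else real (k - m))" for k
  have bi: "b i = real (m + 1 - i)" "0 < b i" using im by (auto simp: b_def)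
  have "(\<Prod>k\<in>{0..n}-{i}. \<bar>s - real k\<bar>) \<le> (\<Prod>k\<in>{0..n}-{i}. b k)"
    using cell by (intro prod_mono) (auto simp: b_def of_nat_diff)
  then have "b i * (\<Prod>k\<in>{0..n}-{i}. \<bar>s - real k\<bar>) \<le> b i * (\<Prod>k\<in>{0..n}-{i}. b k)"
    using bi by (intro mult_left_mono) auto
  also have "\<dots> = fact (m + 1) * fact (n - m)"
    using prod.remove[of "{0..n}" i b] prod_tent_eq[OF mn] assms by (simp add: b_def)
  also have "\<dots> \<le> 2 ^ (n + 1) * fact i * fact (n - i) * real (m + 1 - i)"
    using of_nat_mono[OF fact_Suc_mult_fact_le[OF im mn], where 'a = real]
    by (simp only: of_nat_mult of_nat_fact of_nat_power of_nat_numeral)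
  also have "\<dots> = b i * (2 ^ (n + 1) * fact i * fact (n - i))"
    using bi by (simp add: mult_ac)
  finally show ?thesis using bi by simp
qed

lemma prod_abs_diff_nodes_le:
  fixes s :: real
  assumes "i \<le> n" "0 \<le> s" "s \<le> real n"
  shows "(\<Prod>k\<in>{0..n}-{i}. \<bar>s - real k\<bar>) \<le> 2 ^ (n + 1) * fact i * fact (n - i)"
proof (cases "real i \<le> s")
  case True
  then show ?thesis using prod_abs_diff_nodes_le_right assms by blast
next
  case False
  have "bij_betw (\<lambda>k. n - k) ({0..n}-{n-i}) ({0..n}-{i})"
    by (rule bij_betw_byWitness[where f'="\<lambda>k. n - k"]) (use assms in auto)
  then have "(\<Prod>k\<in>{0..n}-{i}. \<bar>s - real k\<bar>) = (\<Prod>k\<in>{0..n}-{n-i}. \<bar>s - real (n - k)\<bar>)"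
    by (simp add: prod.reindex_bij_betw[symmetric])
  also have "\<dots> = (\<Prod>k\<in>{0..n}-{n-i}. \<bar>(real n - s) - real k\<bar>)"
    by (rule prod.cong) (auto simp: of_nat_diff)
  also have "\<dots> \<le> 2 ^ (n + 1) * fact (n - i) * fact (n - (n - i))"
    using False assms by (intro prod_abs_diff_nodes_le_right) (auto simp: of_nat_diff)
  finally show ?thesis using assms by (simp add: mult_ac)
qed

definition lagrange_basis :: "(nat \<Rightarrow> real) \<Rightarrow> nat \<Rightarrow> nat \<Rightarrow> real \<Rightarrow> real" where
  "lagrange_basis x n i y = (\<Prod>k\<in>{0..n}-{i}. y - x k) / (\<Prod>k\<in>{0..n}-{i}. x i - x k)"

lemma abs_lagrange_basis_equispaced_le:
  fixes a h y :: real
  assumes "0 < h" "i \<le> n" "a - real n * h \<le> y" "y \<le> a"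
  shows "\<bar>lagrange_basis (\<lambda>k. a - real k * h) n i y\<bar> \<le> 2 ^ (n + 1)"
proof -
  define s where "s = (a - y) / h"
  have s: "0 \<le> s" "s \<le> real n" using assms by (auto simp: s_def field_simps)
  have scale: "(\<Prod>k\<in>{0..n}-{i}. (a - z * h) - (a - real k * h))
                 = h ^ card ({0..n}-{i}) * (\<Prod>k\<in>{0..n}-{i}. real k - z)" for z
  proof -
    have "(\<Prod>k\<in>{0..n}-{i}. (a - z * h) - (a - real k * h)) = (\<Prod>k\<in>{0..n}-{i}. h * (real k - z))"
      by (rule prod.cong) (auto simp: algebra_simps)
    then show ?thesis by (simp add: prod.distrib)
  qed
  have y_eq: "y = a - s * h" using assms by (simp add: s_def)
  have "\<bar>lagrange_basis (\<lambda>k. a - real k * h) n i y\<bar>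
      = (\<Prod>k\<in>{0..n}-{i}. \<bar>s - real k\<bar>) / (fact i * fact (n - i))"
    unfolding lagrange_basis_def y_eq scale prod_abs_diff_nodes_eq[OF assms(2), symmetric]
    using assms(1) by (simp add: abs_mult abs_prod abs_minus_commute)
  also have "\<dots> \<le> 2 ^ (n + 1)"
    using prod_abs_diff_nodes_le[OF assms(2) s] by (simp add: divide_le_eq mult.assoc)
  finally show ?thesis .
qed

lemma abs_integral_lagrange_basis_equispaced_le:
  fixes a h :: real
  assumes "0 < h" "i \<le> n" "j \<le> n"
  shows "\<bar>integral {a - real j * h..a} (lagrange_basis (\<lambda>k. a - real k * h) n i)\<bar>
           \<le> 2 ^ (n + 1) * (real j * h)"
proof -
  have "(\<Prod>k\<in>{0..n}-{i}. (a - real i * h) - (a - real k * h)) \<noteq> 0"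
    using assms(1) by (subst prod_zero_iff) auto
  then have cont: "continuous_on {a - real j * h..a} (lagrange_basis (\<lambda>k. a - real k * h) n i)"
    unfolding lagrange_basis_def[abs_def] by (intro continuous_intros) auto
  have "real j * h \<le> real n * h" using assms by (intro mult_right_mono) auto
  then have bound: "norm (lagrange_basis (\<lambda>k. a - real k * h) n i y) \<le> 2 ^ (n + 1)"
    if "y \<in> {a - real j * h..a}" for y
    using that by (simp only: real_norm_def, intro abs_lagrange_basis_equispaced_le[OF assms(1,2)]) auto
  have "a - real j * h \<le> a" using assms by simp
  from integral_bound[OF this cont bound] show ?thesis by simp
qed

lemma psi_eq_lagrange_basis: "psi c0 c1 K T t i = lagrange_basis (tau c0 c1 K T t) (K - 1) i"
  by (simp add: psi_def lagrange_basis_def fun_eq_iff)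

definition noise_rate :: "real \<Rightarrow> nat \<Rightarrow> real" where
  "noise_rate c1 T = c1 * ln (real T) / real T"

locale noise_schedule =
  fixes c0 c1 :: real and T :: nat
  assumes c0_ge_1: "1 \<le> c0" and c1_ge_1: "1 \<le> c1" and T_ge_3: "3 \<le> T"
    and rate_le: "noise_rate c1 T \<le> 1/4"
begin

abbreviation rate :: real where "rate \<equiv> noise_rate c1 T"

definition beta1 :: real where "beta1 = real T powr (- c0)"

definition ramp :: "nat \<Rightarrow> real" where "ramp t = min (beta1 * (1 + rate) ^ t) 1"

abbreviation abar :: "nat \<Rightarrow> real" where "abar \<equiv> alphabar c0 c1 T"

lemma ln_T_ge_1: "1 \<le> ln (real T)"
proof -
  have "exp 1 \<le> real T" using exp_le T_ge_3 by linarith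
  then show ?thesis using T_ge_3 by (simp add: ln_ge_iff)
qed

lemma rate_pos: "0 < rate"
  using ln_T_ge_1 c1_ge_1 T_ge_3 by (simp add: noise_rate_def)

lemma beta1_pos: "0 < beta1"
  using T_ge_3 by (simp add: beta1_def)

lemma beta1_le_rate: "beta1 \<le> rate"
proof -
  have "beta1 \<le> real T powr (-1)"
    unfolding beta1_def by (rule powr_mono) (use c0_ge_1 T_ge_3 in auto)
  also have "\<dots> = 1 / real T" using T_ge_3 by (simp add: powr_minus_divide)
  also have "\<dots> \<le> rate"
    using mult_mono[of 1 c1 1 "ln (real T)"] c1_ge_1 ln_T_ge_1 T_ge_3
    by (simp add: divide_right_mono noise_rate_def)
  finally show ?thesis .
qed

lemma ramp_pos: "0 < ramp t" and ramp_le_1: "ramp t \<le> 1"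
  using beta1_pos rate_pos by (auto simp: ramp_def)

lemma ramp_Suc_le: "ramp (Suc t) \<le> (1 + rate) * ramp t"
proof -
  have "ramp (Suc t) = min (beta1 * (1 + rate) ^ t * (1 + rate)) 1" by (simp add: ramp_def mult_ac)
  also have "\<dots> \<le> min (beta1 * (1 + rate) ^ t * (1 + rate)) (1 + rate)" using rate_pos by simp
  also have "\<dots> = (1 + rate) * ramp t"
    using rate_pos by (simp add: ramp_def min_mult_distrib_left mult.commute)
  finally show ?thesis .
qed

lemma beta_eq: "beta c0 c1 T t = (if t = 1 then beta1 else rate * ramp t)"
  by (simp add: beta_def noise_rate_def beta1_def ramp_def)

lemma beta_pos: "0 < beta c0 c1 T t"
  using beta1_pos rate_pos ramp_pos[of t] by (simp add: beta_eq)

lemma beta_le_rate: "beta c0 c1 T t \<le> rate"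
  using beta1_le_rate rate_pos ramp_le_1[of t] by (auto simp: beta_eq mult_le_cancel_left1)

lemma alpha_ge_one_minus_rate: "1 - rate \<le> alpha c0 c1 T t"
  and alpha_lt_1: "alpha c0 c1 T t < 1"
  and alpha_ge_three_quarters: "3/4 \<le> alpha c0 c1 T t"
  using beta_le_rate[of t] beta_pos[of t] rate_le by (auto simp: alpha_def)

lemma alphabar_0: "abar 0 = 1"
  by (simp add: alphabar_def)

lemma alphabar_Suc: "abar (Suc t) = abar t * alpha c0 c1 T (Suc t)"
  by (simp add: alphabar_def atLeastAtMostSuc_conv mult.commute)

lemma alphabar_pred: "1 \<le> t \<Longrightarrow> abar t = abar (t - 1) * alpha c0 c1 T t"
  using alphabar_Suc[of "t - 1"] by simp

lemma alphabar_pos: "0 < abar t"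
  unfolding alphabar_def using alpha_ge_three_quarters
  by (intro prod_pos) (auto intro: less_le_trans[of 0 "3/4"])

lemma alphabar_le_1: "abar t \<le> 1"
proof (induction t)
  case 0 then show ?case by (simp add: alphabar_0)
next
  case (Suc t)
  then show ?case
    using alphabar_Suc[of t] alpha_lt_1[of "Suc t"] alpha_ge_three_quarters[of "Suc t"]
    by (simp add: mult_le_one)
qed

lemma alphabar_Suc_le: "abar (Suc t) \<le> abar t"
  and alphabar_Suc_ge: "3/4 * abar t \<le> abar (Suc t)"
  using alphabar_Suc[of t] alpha_lt_1[of "Suc t"] alpha_ge_three_quarters[of "Suc t"]
    alphabar_pos[of t] by (auto simp: mult_left_mono mult.commute)

lemma one_minus_alphabar_increment:
  "1 \<le> t \<Longrightarrow> (1 - abar t) - (1 - abar (t - 1)) = beta c0 c1 T t * abar (t - 1)"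
  using alphabar_pred[of t] by (simp add: alpha_def algebra_simps)

lemma ramp_Suc_le_one_minus_alphabar: "1 \<le> s \<Longrightarrow> ramp (Suc s) \<le> 4 * (1 - abar s)"
proof (induction s rule: nat_induct_at_least)
  case base
  have "(1 + rate) ^ 2 \<le> (2::real) ^ 2" by (rule power_mono) (use rate_pos rate_le in auto)
  then have "ramp 2 \<le> 4 * beta1" using beta1_pos by (simp add: ramp_def mult_left_mono min.coboundedI1)
  moreover have "abar 1 = 1 - beta1" using alphabar_Suc[of 0] by (simp add: alphabar_0 alpha_def beta_eq)
  ultimately show ?case by (simp add: numeral_2_eq_2)
next
  case (Suc s)
  define r where "r = ramp (Suc s)"
  have r: "0 < r" "r \<le> 1" using ramp_pos ramp_le_1 by (auto simp: r_def)
  have "abar (Suc s) = abar s * (1 - rate * r)"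
    using alphabar_Suc[of s] Suc.hyps by (simp add: alpha_def beta_eq r_def)
  then have step: "4 * (1 - abar (Suc s)) = 4 * (1 - abar s) * (1 - rate * r) + 4 * (rate * r)"
    by (simp add: algebra_simps)
  have "rate * r \<le> 1/4" using mult_left_le[of r rate] r rate_pos rate_le by linarith
  then have "r * (1 - rate * r) \<le> 4 * (1 - abar s) * (1 - rate * r)"
    using Suc.IH by (intro mult_right_mono) (auto simp: r_def)
  moreover have "(1 + rate) * r \<le> r * (1 - rate * r) + 4 * (rate * r)"
    using rate_pos r mult_left_le[of r "rate * r"] by (simp add: algebra_simps)
  ultimately have "(1 + rate) * r \<le> 4 * (1 - abar (Suc s))"
    using step by linarith
  then show ?case using ramp_Suc_le[of "Suc s"] by (simp add: r_def)
qed

lemma beta_le_four_rate: "2 \<le> t \<Longrightarrow> beta c0 c1 T t \<le> 4 * rate * (1 - abar (t - 1))"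
  using ramp_Suc_le_one_minus_alphabar[of "t - 1"] rate_pos
  by (simp add: beta_eq mult_left_mono mult.assoc)

lemma alphabar_lt_1:
  assumes "1 \<le> t"
  shows "abar t < 1"
proof -
  have "0 < 4 * (1 - abar t)"
    using ramp_pos[of "Suc t"] ramp_Suc_le_one_minus_alphabar[OF assms] by (rule less_le_trans)
  then show ?thesis by simp
qed

lemma one_minus_alphabar_growth:
  assumes "2 \<le> t"
  shows "1 - abar t \<le> (1 + 4 * rate) * (1 - abar (t - 1))"
proof -
  have "beta c0 c1 T t * abar (t - 1) \<le> beta c0 c1 T t"
    using beta_pos[of t] alphabar_le_1 alphabar_pos by (simp add: mult_left_le)
  then show ?thesis
    using one_minus_alphabar_increment[of t] beta_le_four_rate[OF assms] assms
    by (simp add: algebra_simps)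
qed

lemma one_minus_alphabar_le_double: "2 \<le> t \<Longrightarrow> 1 - abar t \<le> 2 * (1 - abar (t - 1))"
  using one_minus_alphabar_growth[of t] alphabar_le_1[of "t - 1"] rate_le
    mult_right_mono[of "1 + 4 * rate" 2 "1 - abar (t - 1)"] by linarith

lemma beta_ratio_bounds:
  assumes "2 \<le> t"
  shows "1/2 * ((1 - alpha c0 c1 T t) / (1 - abar t))
           \<le> 1/2 * ((1 - alpha c0 c1 T t) / (alpha c0 c1 T t - abar t))"
    and "1/2 * ((1 - alpha c0 c1 T t) / (alpha c0 c1 T t - abar t))
           \<le> (1 - alpha c0 c1 T t) / (1 - abar (t - 1))"
    and "(1 - alpha c0 c1 T t) / (1 - abar (t - 1)) \<le> 4 * rate"
proof -
  define a where "a = alpha c0 c1 T t"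
  define A where "A = abar (t - 1)"
  have A: "0 < 1 - A" using alphabar_lt_1[of "t - 1"] assms by (simp add: A_def)
  have a: "a < 1" "3/4 \<le> a" using alpha_lt_1 alpha_ge_three_quarters by (auto simp: a_def)
  have gap: "a - abar t = a * (1 - A)" using alphabar_pred[of t] assms by (simp add: a_def A_def algebra_simps)
  have gap_pos: "0 < a * (1 - A)" using a A by simp
  have gap_le: "a * (1 - A) \<le> 1 - abar t" using gap a by linarith
  have lt_1: "abar t < 1" using alphabar_lt_1 assms by simp
  show "1/2 * ((1 - alpha c0 c1 T t) / (1 - abar t))
           \<le> 1/2 * ((1 - alpha c0 c1 T t) / (alpha c0 c1 T t - abar t))"
    unfolding a_def[symmetric] gap using a A gap_pos gap_le lt_1
    by (intro mult_left_mono divide_left_mono mult_pos_pos) auto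
  have "1/2 * ((1 - a) / (a * (1 - A))) = (1 - a) / (1 - A) * (1 / (2 * a))"
    using a A by (simp add: field_simps)
  also have "\<dots> \<le> (1 - a) / (1 - A)"
    using a A by (intro mult_left_le) (auto simp: field_simps)
  finally have "1/2 * ((1 - a) / (a * (1 - A))) \<le> (1 - a) / (1 - A)" .
  then show "1/2 * ((1 - alpha c0 c1 T t) / (alpha c0 c1 T t - abar t))
           \<le> (1 - alpha c0 c1 T t) / (1 - abar (t - 1))"
    unfolding a_def[symmetric] A_def[symmetric] gap .
  show "(1 - alpha c0 c1 T t) / (1 - abar (t - 1)) \<le> 4 * rate"
    using beta_le_four_rate[OF assms] A by (simp add: divide_le_eq alpha_def A_def)
qed

lemma one_minus_alphabar_ratio_bounds:
  assumes "2 \<le> t"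
  shows "1 \<le> (1 - abar t) / (1 - abar (t - 1))"
    and "(1 - abar t) / (1 - abar (t - 1)) \<le> 1 + 4 * rate"
proof -
  have pos: "0 < 1 - abar (t - 1)" using alphabar_lt_1[of "t - 1"] assms by simp
  show "1 \<le> (1 - abar t) / (1 - abar (t - 1))"
    using alphabar_Suc_le[of "t - 1"] pos assms by (simp add: le_divide_eq)
  show "(1 - abar t) / (1 - abar (t - 1)) \<le> 1 + 4 * rate"
    using one_minus_alphabar_growth[OF assms] pos by (simp add: divide_le_eq)
qed

lemma snr_bounds:
  assumes "1 \<le> t"
  shows "abar (t + 1) / (1 - abar (t + 1)) \<le> abar t / (1 - abar t)"
    and "abar t / (1 - abar t) \<le> 4 * abar (t + 1) / (1 - abar (t + 1))"
proof -
  have pos: "0 < 1 - abar t" "0 < 1 - abar (t + 1)" using alphabar_lt_1 assms by auto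
  show "abar (t + 1) / (1 - abar (t + 1)) \<le> abar t / (1 - abar t)"
    using alphabar_Suc_le[of t] alphabar_pos[of "t + 1"] pos by (intro frac_le) auto
  have "abar t / (1 - abar t) = (2 * abar t) / (2 * (1 - abar t))"
    by (rule mult_divide_mult_cancel_left[symmetric]) simp
  also have "\<dots> \<le> 4 * abar (t + 1) / (1 - abar (t + 1))"
    using alphabar_Suc_ge[of t] one_minus_alphabar_le_double[of "t + 1"] assms pos alphabar_pos[of t]
    by (intro frac_le) auto
  finally show "abar t / (1 - abar t) \<le> 4 * abar (t + 1) / (1 - abar (t + 1))" .
qed

lemma beta_saturated:
  assumes "4 * c0 \<le> c1" "real T \<le> 2 * real t"
  shows "beta c0 c1 T t = rate"
proof -
  have "rate - rate^2 \<le> ln (1 + rate)"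
    by (rule ln_one_plus_pos_lower_bound) (use rate_pos rate_le in auto)
  moreover have "rate^2 \<le> rate / 4" using rate_pos rate_le by (simp add: power2_eq_square)
  ultimately have ln_rate: "3/4 * rate \<le> ln (1 + rate)" by linarith
  have "c0 * ln (real T) \<le> 3/8 * c1 * ln (real T)"
    using assms(1) ln_T_ge_1 c0_ge_1 by (intro mult_right_mono) auto
  also have "\<dots> = real T / 2 * (3/4 * rate)" using T_ge_3 by (simp add: noise_rate_def)
  also have "\<dots> \<le> real t * (3/4 * rate)" using rate_pos assms(2) by (intro mult_right_mono) auto
  also have "\<dots> \<le> real t * ln (1 + rate)" using ln_rate by (intro mult_left_mono) auto
  also have "\<dots> = ln ((1 + rate) ^ t)" using rate_pos by (simp add: ln_realpow)
  finally have "real T powr c0 \<le> (1 + rate) ^ t"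
    using T_ge_3 rate_pos by (simp add: ln_powr ln_le_cancel_iff[symmetric])
  then have "1 \<le> beta1 * (1 + rate) ^ t"
    using T_ge_3 by (simp add: beta1_def powr_minus field_simps)
  moreover have "t \<noteq> 1" using assms(2) T_ge_3 by auto
  ultimately show ?thesis by (simp add: beta_eq ramp_def)
qed

lemma alphabar_T_le_powr:
  assumes "4 * c0 \<le> c1" "2 * c2 \<le> c1"
  shows "abar T \<le> real T powr (- c2)"
proof -
  define S where "S = {T - T div 2..T}"
  have S: "S \<subseteq> {1..T}" using T_ge_3 by (auto simp: S_def)
  have card_S: "real T / 2 \<le> real (card S)" by (simp add: S_def)
  have alpha_nonneg: "0 \<le> alpha c0 c1 T i" for i
    using alpha_ge_three_quarters[of i] by linarith
  have "abar T = (\<Prod>i\<in>S. alpha c0 c1 T i) * (\<Prod>i\<in>{1..T} - S. alpha c0 c1 T i)"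
    unfolding alphabar_def using prod.subset_diff[OF S] by (simp add: mult.commute)
  also have "\<dots> \<le> (\<Prod>i\<in>S. alpha c0 c1 T i)"
    using alpha_lt_1 alpha_nonneg
    by (intro mult_left_le prod_le_1 prod_nonneg) (auto simp: less_imp_le)
  also have "\<dots> = (\<Prod>i\<in>S. 1 - rate)"
    using beta_saturated[OF assms(1)] by (intro prod.cong) (auto simp: alpha_def S_def)
  also have "\<dots> = (1 - rate) ^ card S" by simp
  also have "\<dots> \<le> exp (- rate) ^ card S"
    using rate_le exp_ge_add_one_self[of "- rate"] by (intro power_mono) auto
  also have "\<dots> = exp (- (real (card S) * rate))" by (simp add: exp_of_nat_mult[symmetric])
  also have "\<dots> \<le> exp (- (c1 / 2 * ln (real T)))"
    using mult_right_mono[OF card_S, of rate] rate_pos T_ge_3 by (simp add: noise_rate_def)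
  also have "\<dots> \<le> exp (- (c2 * ln (real T)))"
    using assms(2) ln_T_ge_1 by (simp add: mult_right_mono)
  also have "\<dots> = real T powr (- c2)" using T_ge_3 by (simp add: powr_def)
  finally show ?thesis .
qed

lemma tau_eq:
  assumes "1 \<le> t"
  shows "tau c0 c1 K T t i = (1 - abar t) - real i * (beta c0 c1 T t * abar (t - 1) / real (K - 1))"
  using one_minus_alphabar_increment[OF assms] by (simp add: tau_def)

lemma tau_between:
  assumes "2 \<le> K" "i \<le> K - 1" "1 \<le> t"
  shows "1 - abar (t - 1) \<le> tau c0 c1 K T t i" and "tau c0 c1 K T t i \<le> 1 - abar t"
proof -
  define D where "D = beta c0 c1 T t * abar (t - 1)"
  have D: "0 \<le> D" using beta_pos alphabar_pos by (simp add: D_def less_imp_le)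
  have frac: "0 \<le> real i / real (K - 1)" "real i / real (K - 1) \<le> 1" using assms by auto
  have "tau c0 c1 K T t i = (1 - abar t) - real i / real (K - 1) * D"
    using tau_eq[OF assms(3)] by (simp add: D_def)
  moreover have "real i / real (K - 1) * D \<le> D" using frac D by (rule_tac mult_left_le_one_le) auto
  ultimately show "1 - abar (t - 1) \<le> tau c0 c1 K T t i" "tau c0 c1 K T t i \<le> 1 - abar t"
    using one_minus_alphabar_increment[OF assms(3)] frac D by (simp_all add: D_def)
qed

lemma tau_diff_ratio_le:
  assumes "2 \<le> K" "2 \<le> t" "i1 \<le> K - 1" "i2 \<le> K - 1" "i3 \<le> K - 1" "i4 \<le> K - 1"
  shows "\<bar>(tau c0 c1 K T t i1 - tau c0 c1 K T t i2) /
           (tau c0 c1 K T t i3 * (1 - tau c0 c1 K T t i4))\<bar> \<le> 8 * rate"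
proof -
  have t: "1 \<le> t" using assms by simp
  define A where "A = abar (t - 1)"
  define a where "a = alpha c0 c1 T t"
  have A: "0 < 1 - A" "0 < A" using alphabar_lt_1[of "t - 1"] alphabar_pos assms by (auto simp: A_def)
  have a: "3/4 \<le> a" using alpha_ge_three_quarters by (simp add: a_def)
  have num: "\<bar>tau c0 c1 K T t i1 - tau c0 c1 K T t i2\<bar> \<le> beta c0 c1 T t * A"
    using tau_between[OF assms(1,3) t] tau_between[OF assms(1,4) t]
      one_minus_alphabar_increment[OF t] by (simp add: A_def)
  have den: "(1 - A) * (A * a) \<le> tau c0 c1 K T t i3 * (1 - tau c0 c1 K T t i4)"
    using tau_between[OF assms(1,5) t] tau_between[OF assms(1,6) t] alphabar_pred[OF t] A a
    by (intro mult_mono) (auto simp: A_def a_def)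
  have "beta c0 c1 T t * A \<le> 4 * rate * (1 - A) * A"
    using beta_le_four_rate[OF assms(2)] A by (simp add: A_def mult_right_mono)
  also have "\<dots> \<le> 8 * rate * ((1 - A) * (A * a))"
  proof -
    have "4 * rate * (1 - A) * A * 1 \<le> 4 * rate * (1 - A) * A * (2 * a)"
      using rate_pos A a by (intro mult_left_mono) auto
    then show ?thesis by (simp add: algebra_simps)
  qed
  also have "\<dots> \<le> 8 * rate * (tau c0 c1 K T t i3 * (1 - tau c0 c1 K T t i4))"
    using den rate_pos by (intro mult_left_mono) auto
  finally have "\<bar>tau c0 c1 K T t i1 - tau c0 c1 K T t i2\<bar>
      \<le> 8 * rate * (tau c0 c1 K T t i3 * (1 - tau c0 c1 K T t i4))" using num by linarith
  moreover have "0 < tau c0 c1 K T t i3 * (1 - tau c0 c1 K T t i4)"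
  proof -
    have "0 < (1 - A) * (A * a)" using A a by simp
    then show ?thesis using den by linarith
  qed
  ultimately show ?thesis by (simp add: abs_divide divide_le_eq)
qed

lemma tau_comparable:
  assumes "2 \<le> K" "2 \<le> t" "i \<le> K - 1" "j \<le> K - 1"
  shows "1/2 * (1 - tau c0 c1 K T t j) \<le> 1 - tau c0 c1 K T t i"
    and "1 - tau c0 c1 K T t i \<le> 2 * (1 - tau c0 c1 K T t j)"
    and "1/2 * tau c0 c1 K T t j \<le> tau c0 c1 K T t i"
    and "tau c0 c1 K T t i \<le> 2 * tau c0 c1 K T t j"
proof -
  have t: "1 \<le> t" using assms by simp
  note i = tau_between[OF assms(1,3) t] and j = tau_between[OF assms(1,4) t]
  have "abar (t - 1) \<le> 2 * abar t"
    using alphabar_Suc_ge[of "t - 1"] alphabar_pos[of "t - 1"] t by simp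
  then show "1/2 * (1 - tau c0 c1 K T t j) \<le> 1 - tau c0 c1 K T t i"
    and "1 - tau c0 c1 K T t i \<le> 2 * (1 - tau c0 c1 K T t j)"
    using i j by auto
  show "1/2 * tau c0 c1 K T t j \<le> tau c0 c1 K T t i"
    and "tau c0 c1 K T t i \<le> 2 * tau c0 c1 K T t j"
    using i j one_minus_alphabar_le_double[OF assms(2)] by auto
qed

lemma abs_gamma_at_node_le:
  assumes "2 \<le> K" "2 \<le> t" "i \<le> K - 1" "j \<le> K - 1"
  shows "\<bar>gamma c0 c1 K T t i (tau c0 c1 K T t j)\<bar> \<le> 2 ^ K * (tau c0 c1 K T t 0 - tau c0 c1 K T t j)"
proof -
  define a where "a = 1 - abar t"
  define h where "h = beta c0 c1 T t * abar (t - 1) / real (K - 1)"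
  have h: "0 < h" using beta_pos alphabar_pos assms by (simp add: h_def)
  have nodes: "tau c0 c1 K T t = (\<lambda>k. a - real k * h)"
    using tau_eq assms by (simp add: fun_eq_iff a_def h_def)
  have "gamma c0 c1 K T t i (tau c0 c1 K T t j)
          = integral {a - real j * h..a} (lagrange_basis (\<lambda>k. a - real k * h) (K - 1) i)"
    using h by (simp add: gamma_def oint_def psi_eq_lagrange_basis nodes)
  then show ?thesis
    using abs_integral_lagrange_basis_equispaced_le[OF h assms(3,4)] assms(1) by (simp add: nodes)
qed

end

lemma eventually_noise_rate_le_quarter:
  "\<forall>\<^sub>F T in sequentially. 3 \<le> T \<and> noise_rate c1 T \<le> 1/4"
proof -
  have "\<forall>\<^sub>F T in sequentially. c1 * ln (real T) / real T \<le> 1/4" by real_asymp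
  then show ?thesis
    using eventually_ge_at_top[of 3] by eventually_elim (auto simp: noise_rate_def)
qed

theorem lemma1:
  fixes K :: nat and c2 :: real
  assumes "K \<ge> 2"
  shows "\<exists>C0. \<forall>c0 \<ge> C0. \<exists>C1. \<forall>c1 \<ge> C1.
    (\<exists>c C. c > 0 \<and> C > 0 \<and> (\<exists>T0::nat. \<forall>T \<ge> T0.
      \<comment> \<open>(a)\<close>
      (\<forall>t. 1 \<le> t \<and> t \<le> T \<longrightarrow>
         alpha c0 c1 T t \<ge> 1 - c1 * ln (real T) / real T \<and>
         1 - c1 * ln (real T) / real T \<ge> 1/2) \<and>
      \<comment> \<open>(b)\<close>
      (\<forall>t. 2 \<le> t \<and> t \<le> T \<longrightarrow>
         1/2 * ((1 - alpha c0 c1 T t) / (1 - alphabar c0 c1 T t))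
           \<le> 1/2 * ((1 - alpha c0 c1 T t) / (alpha c0 c1 T t - alphabar c0 c1 T t)) \<and>
         1/2 * ((1 - alpha c0 c1 T t) / (alpha c0 c1 T t - alphabar c0 c1 T t))
           \<le> (1 - alpha c0 c1 T t) / (1 - alphabar c0 c1 T (t - 1)) \<and>
         (1 - alpha c0 c1 T t) / (1 - alphabar c0 c1 T (t - 1))
           \<le> 4 * c1 * ln (real T) / real T) \<and>
      \<comment> \<open>(c)\<close>
      (\<forall>t. 2 \<le> t \<and> t \<le> T \<longrightarrow>
         1 \<le> (1 - alphabar c0 c1 T t) / (1 - alphabar c0 c1 T (t - 1)) \<and>
         (1 - alphabar c0 c1 T t) / (1 - alphabar c0 c1 T (t - 1))
           \<le> 1 + 4 * c1 * ln (real T) / real T) \<and>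
      \<comment> \<open>(d)\<close>
      alphabar c0 c1 T T \<le> real T powr (- c2) \<and>
      \<comment> \<open>(e)\<close>
      (\<forall>t. 1 \<le> t \<and> t < T \<longrightarrow>
         alphabar c0 c1 T (t + 1) / (1 - alphabar c0 c1 T (t + 1))
           \<le> alphabar c0 c1 T t / (1 - alphabar c0 c1 T t) \<and>
         alphabar c0 c1 T t / (1 - alphabar c0 c1 T t)
           \<le> 4 * alphabar c0 c1 T (t + 1) / (1 - alphabar c0 c1 T (t + 1))) \<and>
      \<comment> \<open>(f)\<close>
      (\<forall>t i1 i2 i3 i4. 2 \<le> t \<and> t \<le> T \<and> i1 \<le> K - 1 \<and> i2 \<le> K - 1 \<and>
           i3 \<le> K - 1 \<and> i4 \<le> K - 1 \<longrightarrow>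
         \<bar>(tau c0 c1 K T t i1 - tau c0 c1 K T t i2) /
           (tau c0 c1 K T t i3 * (1 - tau c0 c1 K T t i4))\<bar>
           \<le> 8 * c1 * ln (real T) / real T) \<and>
      \<comment> \<open>(g)\<close>
      (\<forall>t i j. 2 \<le> t \<and> t \<le> T \<and> i \<le> K - 1 \<and> j \<le> K - 1 \<longrightarrow>
         \<bar>gamma c0 c1 K T t i (tau c0 c1 K T t j)\<bar>
           \<le> 2 ^ K * (tau c0 c1 K T t 0 - tau c0 c1 K T t j)) \<and>
      \<comment> \<open>(h)\<close>
      (\<forall>t i j. 2 \<le> t \<and> t \<le> T \<and> i \<le> K - 1 \<and> j \<le> K - 1 \<longrightarrow>
         c * (1 - tau c0 c1 K T t j) \<le> 1 - tau c0 c1 K T t i \<and>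
         1 - tau c0 c1 K T t i \<le> C * (1 - tau c0 c1 K T t j) \<and>
         c * tau c0 c1 K T t j \<le> tau c0 c1 K T t i \<and>
         tau c0 c1 K T t i \<le> C * tau c0 c1 K T t j)))"
proof -
  obtain T0 :: "real \<Rightarrow> nat"
    where T0: "\<And>c1 T. T0 c1 \<le> T \<Longrightarrow> 3 \<le> T \<and> noise_rate c1 T \<le> 1/4"
    using eventually_noise_rate_le_quarter unfolding eventually_sequentially by metis
  have scaled_rate: "k * c1 * ln (real T) / real T = k * noise_rate c1 T" for k c1 T
    by (simp add: noise_rate_def)
  have rate: "c1 * ln (real T) / real T = noise_rate c1 T" for c1 T
    by (simp add: noise_rate_def)
  show ?thesis
    apply (rule exI[of _ 1], intro allI impI)
    subgoal premises c0 for c0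
      apply (rule exI[of _ "max 1 (max (4 * c0) (2 * c2))"], intro allI impI)
      subgoal premises c1 for c1
        apply (rule exI[of _ "1/2"], rule exI[of _ 2], intro conjI, simp, simp)
        apply (rule exI[of _ "T0 c1"], intro allI impI)
        subgoal premises T for T
        proof -
          interpret noise_schedule c0 c1 T
            using c0 c1 T0[OF T] by unfold_locales auto
          have half: "1/2 \<le> 1 - rate" using rate_le by simp
          have alphabar_T: "alphabar c0 c1 T T \<le> real T powr (- c2)"
            using c1 by (intro alphabar_T_le_powr) auto
          show ?thesis
            unfolding scaled_rate unfolding rate
            by (intro conjI allI impI; (elim conjE)?;
                rule half alphabar_T alpha_ge_one_minus_rate beta_ratio_bounds
                  one_minus_alphabar_ratio_bounds snr_bounds tau_diff_ratio_le[OF assms]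
                  abs_gamma_at_node_le[OF assms] tau_comparable[OF assms];
                assumption)
        qed
        done
      done
    done
qed

end
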